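(* Let $R$ be a commutative ring, let $I$ be a 2-absorbing ideal of $R$, let $J$ be an ideal of $R$, and let $x,y\in R$ satisfy $xyJ\subseteq I$. Then $xy\in I$ or $xJ\subseteq I$ or $yJ\subseteq I$.
   Context: All rings are commutative with identity $1\neq 0$. An ideal $I$ of $R$ is 2-absorbing if whenever $a,b,c\in R$ and $abc\in I$, then $ab\in I$ or $ac\in I$ or $bc\in I$. *)

theory Defs
  imports "HOL-Algebra.Ideal"
begin

definition two_absorbing :: "('a, 'b) ring_scheme \<Rightarrow> 'a set \<Rightarrow> bool" where
  "two_absorbing R I \<longleftrightarrow> ideal I R \<and>
     (\<forall>a\<in>carrier R. \<forall>b\<in>carrier R. \<forall>c\<in>carrier R.
        a \<otimes>\<^bsub>R\<^esub> b \<otimes>\<^bsub>R\<^esub> c \<in> I \<longrightarrow>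
        a \<otimes>\<^bsub>R\<^esub> b \<in> I \<or> a \<otimes>\<^bsub>R\<^esub> c \<in> I \<or> b \<otimes>\<^bsub>R\<^esub> c \<in> I)"

end

theory Submission
  imports Defs
begin

text \<open>Suppose \<open>xy \<notin> I\<close>. For each \<open>j \<in> J\<close>, two-absorption applied to \<open>x y j \<in> I\<close> gives
  \<open>xj \<in> I\<close> or \<open>yj \<in> I\<close>, so \<open>J\<close> is the union of the two additive subgroups
  \<open>{j \<in> J. xj \<in> I}\<close> and \<open>{j \<in> J. yj \<in> I}\<close>. A group is never the union of two proper
  subgroups: if \<open>j\<^sub>1\<close> lies only in the first and \<open>j\<^sub>2\<close> only in the second, then
  \<open>j\<^sub>1 + j\<^sub>2\<close> lies in neither.\<close>

lemma (in ideal) add_right_cancel: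
  assumes "a \<in> carrier R" and "b \<in> I" and "a \<oplus> b \<in> I"
  shows "a \<in> I"
proof -
  have "a = (a \<oplus> b) \<oplus> \<ominus> b"
    using assms(1) Icarr[OF assms(2)] by (simp add: a_assoc r_neg)
  also have "\<dots> \<in> I"
    using assms(2,3) by simp
  finally show ?thesis .
qed

lemma (in ideal) add_left_cancel:
  assumes "a \<in> carrier R" and "b \<in> I" and "b \<oplus> a \<in> I"
  shows "a \<in> I"
  using add_right_cancel[OF assms(1,2)] assms Icarr by (simp add: a_comm)

lemma two_absorbing_imp_ideal: "two_absorbing R I \<Longrightarrow> ideal I R"
  unfolding two_absorbing_def by simp

lemma two_absorbingD:
  assumes "two_absorbing R I"
    and "a \<in> carrier R" and "b \<in> carrier R" and "c \<in> carrier R"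
    and "a \<otimes>\<^bsub>R\<^esub> b \<otimes>\<^bsub>R\<^esub> c \<in> I"
  shows "a \<otimes>\<^bsub>R\<^esub> b \<in> I \<or> a \<otimes>\<^bsub>R\<^esub> c \<in> I \<or> b \<otimes>\<^bsub>R\<^esub> c \<in> I"
  using assms unfolding two_absorbing_def by blast

lemma (in ring) mult_mem_ideal_cover_cases:
  assumes I: "ideal I R" and J: "additive_subgroup J R"
    and x: "x \<in> carrier R" and y: "y \<in> carrier R"
    and cover: "\<forall>j\<in>J. x \<otimes> j \<in> I \<or> y \<otimes> j \<in> I"
  shows "(\<forall>j\<in>J. x \<otimes> j \<in> I) \<or> (\<forall>j\<in>J. y \<otimes> j \<in> I)"
proof (rule ccontr)
  interpret I: ideal I R by fact
  interpret J: additive_subgroup J R by fact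
  assume "\<not> ?thesis"
  then obtain j\<^sub>1 j\<^sub>2 where j\<^sub>1: "j\<^sub>1 \<in> J" "x \<otimes> j\<^sub>1 \<notin> I"
    and j\<^sub>2: "j\<^sub>2 \<in> J" "y \<otimes> j\<^sub>2 \<notin> I"
    by blast
  have carr: "j\<^sub>1 \<in> carrier R" "j\<^sub>2 \<in> carrier R"
    using j\<^sub>1 j\<^sub>2 J.a_subset by auto
  have yj\<^sub>1: "y \<otimes> j\<^sub>1 \<in> I" and xj\<^sub>2: "x \<otimes> j\<^sub>2 \<in> I"
    using bspec[OF cover j\<^sub>1(1)] bspec[OF cover j\<^sub>2(1)] j\<^sub>1(2) j\<^sub>2(2) by auto
  have "x \<otimes> (j\<^sub>1 \<oplus> j\<^sub>2) \<in> I \<or> y \<otimes> (j\<^sub>1 \<oplus> j\<^sub>2) \<in> I"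
    using bspec[OF cover J.a_closed[OF j\<^sub>1(1) j\<^sub>2(1)]] .
  then show False
  proof
    assume "x \<otimes> (j\<^sub>1 \<oplus> j\<^sub>2) \<in> I"
    then have "x \<otimes> j\<^sub>1 \<oplus> x \<otimes> j\<^sub>2 \<in> I"
      using x carr by (simp add: r_distr)
    with xj\<^sub>2 have "x \<otimes> j\<^sub>1 \<in> I"
      using I.add_right_cancel x carr(1) by blast
    with j\<^sub>1 show False by simp
  next
    assume "y \<otimes> (j\<^sub>1 \<oplus> j\<^sub>2) \<in> I"
    then have "y \<otimes> j\<^sub>1 \<oplus> y \<otimes> j\<^sub>2 \<in> I"
      using y carr by (simp add: r_distr)
    with yj\<^sub>1 have "y \<otimes> j\<^sub>2 \<in> I"
      using I.add_left_cancel y carr(2) by blast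
    with j\<^sub>2 show False by simp
  qed
qed

theorem lemma2:
  fixes R (structure)
  assumes "cring R" and "\<one> \<noteq> \<zero>"
    and "two_absorbing R I"
    and "ideal J R"
    and "x \<in> carrier R" and "y \<in> carrier R"
    and "\<forall>j\<in>J. x \<otimes> y \<otimes> j \<in> I"
  shows "x \<otimes> y \<in> I \<or> (\<forall>j\<in>J. x \<otimes> j \<in> I) \<or> (\<forall>j\<in>J. y \<otimes> j \<in> I)"
proof (cases "x \<otimes> y \<in> I")
  case False
  interpret cring R by fact
  interpret J: ideal J R by fact
  have "x \<otimes> j \<in> I \<or> y \<otimes> j \<in> I" if "j \<in> J" for j
    using two_absorbingD[OF assms(3,5,6) J.Icarr[OF that] bspec[OF assms(7) that]] False
    by blast
  then have "(\<forall>j\<in>J. x \<otimes> j \<in> I) \<or> (\<forall>j\<in>J. y \<otimes> j \<in> I)"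
    by (intro mult_mem_ideal_cover_cases[OF two_absorbing_imp_ideal[OF assms(3)]
          J.additive_subgroup_axioms assms(5,6)]) blast
  then show ?thesis by blast
qed simp

end
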